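(* Let $r>2-\sqrt2-\ln\big(2\sqrt2-2\big)$ be fixed and consider the one-parameter family of maps $f(x,k)=x^2\exp(r-x)+k$ with bifurcation parameter $k$. Then there is a unique point $x(r)\in(0,2-\sqrt2)$ and a unique parameter value $k^*$ such that $x(r)$ is a fixed point of $f(\cdot,k^* )$ in the interval $(0,2-\sqrt2)$ and the family undergoes a fold bifurcation at $x(r)$ with respect to $k$ at the bifurcation value $k=k^*$. Moreover, \[ k^*=x(r)-\frac{x(r)}{2-x(r)}. \]
   Context: For a smooth one-parameter family $x\mapsto f(x,a)$ of maps of $\mathbb{R}$ with a fixed point $x_0$ at $a=a_0$, one says that a fold (saddle-node) bifurcation occurs at $x_0$ for $a=a_0$ if $\frac{\partial f}{\partial x}(x_0,a_0)=1$ and the nondegeneracy conditions (A.1) $\frac{\partial^2 f}{\partial x^2}(x_0,a_0)\neq0$ and (A.2) $\frac{\partial f}{\partial a}(x_0,a_0)\neq 0$ hold; then smooth invertible changes of coordinates and parameter transform the system into $\eta\mapsto\beta+\eta\pm\eta^2+O(\eta^3)$. *)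

theory Defs
  imports "HOL-Analysis.Analysis"
begin

text \<open>Differentiability requirements make the derivatives meaningful.\<close>

definition fold_bifurcation :: "(real \<Rightarrow> real \<Rightarrow> real) \<Rightarrow> real \<Rightarrow> real \<Rightarrow> bool" where
  "fold_bifurcation f x0 a0 \<longleftrightarrow>
     f x0 a0 = x0 \<and>
     (\<forall>\<^sub>F x in nhds x0. (\<lambda>y. f y a0) differentiable at x) \<and>
     deriv (\<lambda>y. f y a0) x0 = 1 \<and>
     deriv (\<lambda>y. f y a0) differentiable at x0 \<and>
     deriv (deriv (\<lambda>y. f y a0)) x0 \<noteq> 0 \<and>
     (\<lambda>a. f x0 a) differentiable at a0 \<and>
     deriv (\<lambda>a. f x0 a) a0 \<noteq> 0"

end

theory Submission
  imports Defs
begin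

text \<open>For a family with additive parameter, \<open>f x k = g x + k\<close>, the fold conditions say
  \<open>g' x = 1\<close>, \<open>g'' x \<noteq> 0\<close> and \<open>k = x - g x\<close>. For \<open>g x = x\<^sup>2 e\<^sup>r\<^sup>-\<^sup>x\<close> the second derivative
  \<open>(x\<^sup>2 - 4x + 2) e\<^sup>r\<^sup>-\<^sup>x\<close> is positive on \<open>[0, 2 - \<surd>2)\<close> and vanishes at the inflection point
  \<open>2 - \<surd>2\<close>, so \<open>g'\<close> increases strictly there from \<open>g' 0 = 0\<close> to
  \<open>(2\<surd>2 - 2) e\<^sup>r\<^sup>-\<^sup>2\<^sup>+\<^sup>\<surd>\<^sup>2\<close>, which exceeds 1 exactly when \<open>r\<close> is above the threshold.
  Hence \<open>g' x = 1\<close> has exactly one solution in \<open>(0, 2 - \<surd>2)\<close>; there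
  \<open>e\<^sup>r\<^sup>-\<^sup>x = 1 / (x (2 - x))\<close>, which turns \<open>k = x - g x\<close> into \<open>x - x / (2 - x)\<close>.\<close>

lemma deriv_add_const: "deriv (\<lambda>x. g x + c) = deriv (g :: real \<Rightarrow> real)"
  unfolding deriv_def has_field_derivative_iff by simp

lemma fold_bifurcation_additive_iff:
  fixes g :: "real \<Rightarrow> real"
  assumes "\<forall>\<^sub>F x in nhds x0. g differentiable at x"
    and "deriv g differentiable at x0"
  shows "fold_bifurcation (\<lambda>x a. g x + a) x0 a0 \<longleftrightarrow>
           g x0 + a0 = x0 \<and> deriv g x0 = 1 \<and> deriv (deriv g) x0 \<noteq> 0"
proof -
  have "\<forall>\<^sub>F x in nhds x0. (\<lambda>y. g y + a0) differentiable at x"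
    using assms(1) by (rule eventually_mono) (intro derivative_intros)
  moreover have "((\<lambda>a. g x0 + a) has_real_derivative 1) (at a0)"
    by (auto intro!: derivative_eq_intros)
  ultimately show ?thesis
    using assms(2) unfolding fold_bifurcation_def deriv_add_const
    by (auto simp: DERIV_imp_deriv real_differentiable_def)
qed

lemma DERIV_pos_imp_strict_mono_on:
  fixes f :: "real \<Rightarrow> real"
  assumes "continuous_on {a..b} f"
    and "\<And>x. a < x \<Longrightarrow> x < b \<Longrightarrow> (f has_real_derivative f' x) (at x)"
    and "\<And>x. a < x \<Longrightarrow> x < b \<Longrightarrow> 0 < f' x"
  shows "strict_mono_on {a..b} f"
proof (rule strict_mono_onI)
  fix u v assume uv: "u \<in> {a..b}" "v \<in> {a..b}" "u < v"
  show "f u < f v"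
  proof (rule DERIV_pos_imp_increasing_open[OF \<open>u < v\<close>])
    fix x assume "u < x" "x < v"
    then show "\<exists>y. (f has_real_derivative y) (at x) \<and> 0 < y"
      using uv assms(2,3)[of x] by auto
  next
    show "continuous_on {u..v} f"
      using uv by (intro continuous_on_subset[OF assms(1)]) auto
  qed
qed

lemma ex1_crossing_strict_mono_on:
  fixes h :: "real \<Rightarrow> real"
  assumes "a \<le> b" "continuous_on {a..b} h" "strict_mono_on {a..b} h" "h a < c" "c < h b"
  shows "\<exists>!x. x \<in> {a<..<b} \<and> h x = c"
proof -
  obtain x where "a \<le> x" "x \<le> b" "h x = c"
    using IVT'[OF _ _ assms(1,2), of c] assms(4,5) by fastforce
  moreover have "y = x" if "y \<in> {a<..<b}" "h y = c" for y
    using strict_mono_on_eqD[OF assms(3)] that \<open>a \<le> x\<close> \<open>x \<le> b\<close> \<open>h x = c\<close> by auto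
  ultimately show ?thesis
    using assms(4,5) by (intro ex1I[of _ x]) (auto simp: less_le)
qed

lemma quadratic_pos_below_root: "(x :: real) < 2 - sqrt 2 \<Longrightarrow> 0 < x\<^sup>2 - 4 * x + 2"
proof -
  assume "x < 2 - sqrt 2"
  then have "0 < (2 - sqrt 2 - x) * (2 + sqrt 2 - x)"
    using real_sqrt_ge_zero[of 2] by (intro mult_pos_pos) linarith+
  also have "\<dots> = x\<^sup>2 - 4 * x + 2"
    by (simp add: algebra_simps power2_eq_square)
  finally show ?thesis .
qed

lemma has_real_derivative_sq_exp:
  fixes r x :: real
  shows "((\<lambda>x. x\<^sup>2 * exp (r - x)) has_real_derivative (2 * x - x\<^sup>2) * exp (r - x)) (at x)"
  by (auto intro!: derivative_eq_intros simp: algebra_simps power2_eq_square)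

lemma has_real_derivative_deriv_sq_exp:
  fixes r x :: real
  shows "((\<lambda>x. (2 * x - x\<^sup>2) * exp (r - x)) has_real_derivative (x\<^sup>2 - 4 * x + 2) * exp (r - x)) (at x)"
  by (auto intro!: derivative_eq_intros simp: algebra_simps power2_eq_square)

lemma deriv_sq_exp: "deriv (\<lambda>x. x\<^sup>2 * exp (r - x :: real)) = (\<lambda>x. (2 * x - x\<^sup>2) * exp (r - x))"
  using has_real_derivative_sq_exp by (intro ext DERIV_imp_deriv)

lemma deriv_deriv_sq_exp:
  "deriv (deriv (\<lambda>x. x\<^sup>2 * exp (r - x :: real))) = (\<lambda>x. (x\<^sup>2 - 4 * x + 2) * exp (r - x))"
  unfolding deriv_sq_exp using has_real_derivative_deriv_sq_exp by (intro ext DERIV_imp_deriv)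

lemma strict_mono_on_deriv_sq_exp:
  "strict_mono_on {0..2 - sqrt 2} (\<lambda>x. (2 * x - x\<^sup>2) * exp (r - x))"
  by (rule DERIV_pos_imp_strict_mono_on[OF _ has_real_derivative_deriv_sq_exp])
     (auto intro!: continuous_intros mult_pos_pos quadratic_pos_below_root)

lemma deriv_sq_exp_at_inflection_gt_1:
  assumes "r > 2 - sqrt 2 - ln (2 * sqrt 2 - 2)"
  shows "1 < (2 * (2 - sqrt 2) - (2 - sqrt 2)\<^sup>2) * exp (r - (2 - sqrt 2))"
proof -
  have pos: "0 < 2 * sqrt 2 - 2"
    using real_sqrt_less_iff[of 1 2] by simp
  have "1 = (2 * sqrt 2 - 2) * exp (- ln (2 * sqrt 2 - 2))"
    using pos by (simp add: exp_minus)
  also have "\<dots> < (2 * sqrt 2 - 2) * exp (r - (2 - sqrt 2))"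
    using assms pos by (intro mult_strict_left_mono) auto
  also have "2 * sqrt 2 - 2 = 2 * (2 - sqrt 2) - (2 - sqrt 2)\<^sup>2"
    by (simp add: algebra_simps power2_eq_square)
  finally show ?thesis .
qed

lemma fold_bifurcation_sq_exp_iff:
  assumes "y < 2 - sqrt 2"
  shows "fold_bifurcation (\<lambda>x k. x\<^sup>2 * exp (r - x) + k) y j \<longleftrightarrow>
           y\<^sup>2 * exp (r - y) + j = y \<and> (2 * y - y\<^sup>2) * exp (r - y) = 1"
proof -
  let ?g = "\<lambda>x. x\<^sup>2 * exp (r - x)"
  have g_diff: "?g differentiable at x" "deriv ?g differentiable at x" for x
    unfolding deriv_sq_exp real_differentiable_def
    using has_real_derivative_sq_exp has_real_derivative_deriv_sq_exp by blast+
  have "deriv (deriv ?g) y \<noteq> 0"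
    using quadratic_pos_below_root[OF assms] by (simp add: deriv_deriv_sq_exp)
  then show ?thesis
    using fold_bifurcation_additive_iff[of ?g y j] g_diff
    by (simp add: deriv_sq_exp always_eventually)
qed

lemma ex1_deriv_sq_exp_eq_1:
  assumes "r > 2 - sqrt 2 - ln (2 * sqrt 2 - 2)"
  shows "\<exists>!x. x \<in> {0<..<2 - sqrt 2} \<and> (2 * x - x\<^sup>2) * exp (r - x) = 1"
proof (rule ex1_crossing_strict_mono_on[OF _ _ strict_mono_on_deriv_sq_exp _
      deriv_sq_exp_at_inflection_gt_1[OF assms]])
  show "0 \<le> 2 - sqrt 2"
    using real_less_lsqrt[of 2 2] by simp
qed (auto intro!: continuous_intros)

theorem theorem2p4:
  fixes r :: real
  assumes "r > 2 - sqrt 2 - ln (2 * sqrt 2 - 2)"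
  defines "f \<equiv> (\<lambda>x k. x\<^sup>2 * exp (r - x) + k)"
  shows "\<exists>x k. x \<in> {0<..<2 - sqrt 2} \<and> fold_bifurcation f x k
           \<and> (\<forall>y j. y \<in> {0<..<2 - sqrt 2} \<and> fold_bifurcation f y j \<longrightarrow> y = x \<and> j = k)
           \<and> k = x - x / (2 - x)"
proof -
  obtain x where x: "x \<in> {0<..<2 - sqrt 2}" "(2 * x - x\<^sup>2) * exp (r - x) = 1"
    and uniq: "\<And>y. y \<in> {0<..<2 - sqrt 2} \<Longrightarrow> (2 * y - y\<^sup>2) * exp (r - y) = 1 \<Longrightarrow> y = x"
    using ex1_deriv_sq_exp_eq_1[OF assms(1)] by blast
  define k where "k = x - x\<^sup>2 * exp (r - x)"
  have fold_iff: "fold_bifurcation f y j \<longleftrightarrow> y\<^sup>2 * exp (r - y) + j = y \<and> (2 * y - y\<^sup>2) * exp (r - y) = 1"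
    if "y \<in> {0<..<2 - sqrt 2}" for y j
    unfolding f_def using that by (intro fold_bifurcation_sq_exp_iff) simp
  have "x < 2"
    using x(1) real_sqrt_ge_zero[of 2] unfolding greaterThanLessThan_iff by linarith
  then have "k = x - x / (2 - x)"
    using x unfolding k_def by (auto simp: field_simps power2_eq_square)
  moreover have "fold_bifurcation f x k"
    using fold_iff[OF x(1)] x(2) by (simp add: k_def)
  moreover have "y = x \<and> j = k" if "y \<in> {0<..<2 - sqrt 2}" "fold_bifurcation f y j" for y j
    using that fold_iff uniq by (auto simp: k_def)
  ultimately show ?thesis
    using x(1) by blast
qed

end
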